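(* Let $R\in\mathbb C^{n\times n}$ be such that $\tilde R=\frac12(R+R^* )$ is positive definite, and let $\bar R=\frac12(R-R^* )$. Then: (1) $R$ is invertible; (2) $\frac12(R^{-1}+(R^* )^{-1})$ is positive definite; (3) $\left(\frac{R+R^*}{2}\right)^{-1}\succcurlyeq\frac{R^{-1}+(R^* )^{-1}}{2}$; (4) $\frac{R+R^*}{2}\succcurlyeq\frac{R^*R^{-1}R^*+R(R^* )^{-1}R}{2}$; (5) for $-1\le\alpha\le1$ let $W_\alpha=\tilde R+\alpha\bar R$; then for all $\alpha,\beta\in[-1,1]$ with $|\alpha|\le|\beta|$, \[ \frac{W_\alpha^{-1}+(W_\alpha^* )^{-1}}{2}\succcurlyeq\frac{W_\beta^{-1}+(W_\beta^* )^{-1}}{2}. \]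
   Context: $M^*$ is the conjugate transpose. For Hermitian $X,Y$, $X\succcurlyeq Y$ means $X-Y$ is positive semidefinite. *)

theory Defs
  imports "HOL-Analysis.Analysis"
begin

definition cadj :: "complex^'n^'n \<Rightarrow> complex^'n^'n" where
  "cadj A = (\<chi> i j. cnj (A $ j $ i))"

definition hermitian :: "complex^'n^'n \<Rightarrow> bool" where
  "hermitian A \<longleftrightarrow> cadj A = A"

definition qform :: "complex^'n^'n \<Rightarrow> complex^'n \<Rightarrow> complex" where
  "qform A x = (\<Sum>i\<in>UNIV. \<Sum>j\<in>UNIV. cnj (x $ i) * A $ i $ j * x $ j)"

definition pos_semidef :: "complex^'n^'n \<Rightarrow> bool" where
  "pos_semidef A \<longleftrightarrow> hermitian A \<and> (\<forall>x. Im (qform A x) = 0 \<and> 0 \<le> Re (qform A x))"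

definition pos_def :: "complex^'n^'n \<Rightarrow> bool" where
  "pos_def A \<longleftrightarrow> hermitian A \<and> (\<forall>x. x \<noteq> 0 \<longrightarrow> Im (qform A x) = 0 \<and> 0 < Re (qform A x))"

definition loewner_ge :: "complex^'n^'n \<Rightarrow> complex^'n^'n \<Rightarrow> bool" where
  "loewner_ge X Y \<longleftrightarrow> hermitian X \<and> hermitian Y \<and> pos_semidef (X - Y)"

end

theory Submission
  imports Defs
begin

text \<open>
  Write \<open>W = H + c S\<close> with \<open>H\<close> its (positive definite) Hermitian part and \<open>S\<close> skew-Hermitian.
  Since \<open>Re (x\<^sup>* W x) = x\<^sup>* H x\<close>, \<open>W\<close> is invertible, and the Hermitian part \<open>G\<close> of \<open>W\<^sup>-\<^sup>1\<close>
  is the congruence \<open>W\<^sup>-\<^sup>* H W\<^sup>-\<^sup>1\<close>, hence positive definite with inverse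
  \<open>W H\<^sup>-\<^sup>1 W\<^sup>* = H + c\<^sup>2 S\<^sup>* H\<^sup>-\<^sup>1 S\<close>. This inverse grows with \<open>c\<^sup>2\<close> in the Loewner order, and
  inversion reverses that order on positive definite matrices; this gives (5), and (3) is the
  case \<open>c = 0\<close> against \<open>c = 1\<close>. Finally (4) is (3) conjugated by \<open>H\<close>, because
  \<open>W\<^sup>* W\<^sup>-\<^sup>1 W\<^sup>* + W W\<^sup>-\<^sup>* W = 8 H G H - 6 H\<close> (substitute \<open>W\<^sup>* = 2 H - W\<close>).
\<close>

subsection \<open>Matrix algebra\<close>

lemma matrix_add_rdistrib: "(A + B) ** C = A ** C + B ** (C :: 'a::semiring_1^_^_)"
  by (vector matrix_matrix_mult_def sum.distrib distrib_right)

lemma matrix_diff_ldistrib: "A ** (B - C) = A ** B - A ** (C :: 'a::ring_1^_^_)"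
  by (vector matrix_matrix_mult_def sum_subtractf right_diff_distrib)

lemma matrix_diff_rdistrib: "(A - B) ** C = A ** C - B ** (C :: 'a::ring_1^_^_)"
  by (vector matrix_matrix_mult_def sum_subtractf left_diff_distrib)

lemma matrix_scaleR_left: "(k *\<^sub>R A) ** B = k *\<^sub>R (A ** (B :: 'a::real_algebra_1^_^_))"
  by (simp add: scalar_matrix_assoc)

lemma matrix_scaleR_right: "A ** (k *\<^sub>R B) = k *\<^sub>R (A ** (B :: 'a::real_algebra_1^_^_))"
  by (simp add: matrix_scalar_ac scalar_matrix_assoc)

lemma matrix_uminus_left: "(- A) ** B = - (A ** (B :: 'a::ring_1^_^_))"
  by (vector matrix_matrix_mult_def sum_negf)

lemma matrix_uminus_right: "A ** (- B) = - (A ** (B :: 'a::ring_1^_^_))"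
  by (vector matrix_matrix_mult_def sum_negf)

lemma matrix_inverse_cancel_left: "A ** B = mat 1 \<Longrightarrow> A ** (B ** C) = C"
  by (simp add: matrix_mul_assoc)

lemmas matrix_mult_simps = matrix_add_ldistrib matrix_add_rdistrib matrix_diff_ldistrib
  matrix_diff_rdistrib matrix_scaleR_left matrix_scaleR_right matrix_uminus_left matrix_uminus_right

lemma matrix_inv_right: "invertible A \<Longrightarrow> A ** matrix_inv A = mat 1"
  unfolding invertible_def matrix_inv_def by (rule someI_ex[THEN conjunct1])

lemma matrix_inv_left: "invertible A \<Longrightarrow> matrix_inv A ** A = mat 1"
  unfolding invertible_def matrix_inv_def by (rule someI_ex[THEN conjunct2])

lemma matrix_inv_unique:
  fixes A B :: "'a::field^'n^'n"
  assumes "A ** B = mat 1"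
  shows "matrix_inv A = B"
proof -
  have "invertible A"
    using assms invertible_right_inverse by blast
  then have "matrix_inv A = (matrix_inv A ** A) ** B"
    by (simp flip: matrix_mul_assoc add: assms)
  also have "\<dots> = B"
    using \<open>invertible A\<close> by (simp add: matrix_inv_left)
  finally show ?thesis .
qed

lemma invertible_matrix_inv: "invertible A \<Longrightarrow> invertible (matrix_inv A)"
  unfolding invertible_def using matrix_inv_left matrix_inv_right invertible_def by blast

lemma matrix_inv_matrix_inv:
  fixes A :: "'a::field^'n^'n"
  shows "invertible A \<Longrightarrow> matrix_inv (matrix_inv A) = A"
  by (rule matrix_inv_unique) (rule matrix_inv_left)

lemma cadj_cadj [simp]: "cadj (cadj A) = A"
  unfolding cadj_def by (simp add: vec_eq_iff)

lemma cadj_add [simp]: "cadj (A + B) = cadj A + cadj B"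
  unfolding cadj_def by (simp add: vec_eq_iff)

lemma cadj_diff [simp]: "cadj (A - B) = cadj A - cadj B"
  unfolding cadj_def by (simp add: vec_eq_iff)

lemma cadj_scaleR [simp]: "cadj (c *\<^sub>R A) = c *\<^sub>R cadj A"
  unfolding cadj_def by (simp add: vec_eq_iff vector_scaleR_component scaleR_conv_of_real[where 'a=complex])

lemma cadj_mat [simp]: "cadj (mat 1) = mat 1"
  unfolding cadj_def mat_def by (simp add: vec_eq_iff)

lemma cadj_matrix_mult: "cadj (A ** B) = cadj B ** cadj A"
  unfolding cadj_def matrix_matrix_mult_def by (simp add: vec_eq_iff mult.commute)

lemma invertible_cadj: "invertible A \<Longrightarrow> invertible (cadj A)"
  unfolding invertible_def by (metis cadj_matrix_mult cadj_mat)

lemma matrix_inv_cadj: "invertible A \<Longrightarrow> matrix_inv (cadj A) = cadj (matrix_inv A)"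
  by (rule matrix_inv_unique) (metis cadj_matrix_mult cadj_mat matrix_inv_left)

subsection \<open>Quadratic forms and the Loewner order\<close>

definition cinner :: "complex^'n \<Rightarrow> complex^'n \<Rightarrow> complex" where
  "cinner x y = (\<Sum>i\<in>UNIV. cnj (x $ i) * y $ i)"

lemma cnj_cinner: "cnj (cinner x y) = cinner y x"
  unfolding cinner_def by (simp add: mult.commute)

lemma Re_cinner_commute: "Re (cinner y x) = Re (cinner x y)"
  by (metis cnj.sel(1) cnj_cinner)

lemma cinner_diff_left: "cinner (x - y) z = cinner x z - cinner y z"
  unfolding cinner_def by (simp add: left_diff_distrib sum_subtractf)

lemma cinner_diff_right: "cinner x (y - z) = cinner x y - cinner x z"
  unfolding cinner_def by (simp add: right_diff_distrib sum_subtractf)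

lemma cinner_zero_right [simp]: "cinner x 0 = 0"
  unfolding cinner_def by simp

lemma cinner_matrix_vector_mult: "cinner x (A *v y) = cinner (cadj A *v x) y"
proof -
  have "cinner x (A *v y) = (\<Sum>i\<in>UNIV. \<Sum>j\<in>UNIV. cnj (x$i) * A$i$j * y$j)"
    unfolding cinner_def matrix_vector_mult_def by (simp add: sum_distrib_left mult.assoc)
  also have "\<dots> = (\<Sum>j\<in>UNIV. \<Sum>i\<in>UNIV. cnj (x$i) * A$i$j * y$j)"
    by (rule sum.swap)
  also have "\<dots> = cinner (cadj A *v x) y"
    unfolding cinner_def matrix_vector_mult_def cadj_def
    by (simp add: sum_distrib_left sum_distrib_right mult.commute mult.left_commute)
  finally show ?thesis .
qed

lemma qform_conv_cinner: "qform A x = cinner x (A *v x)"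
  unfolding qform_def cinner_def matrix_vector_mult_def
  by (simp add: sum_distrib_left mult.assoc)

lemma qform_zero_right [simp]: "qform A 0 = 0"
  unfolding qform_def by simp

lemma qform_cadj: "qform (cadj A) x = cnj (qform A x)"
  by (simp add: qform_conv_cinner cinner_matrix_vector_mult[of x "cadj A"] cnj_cinner)

lemma qform_add: "qform (A + B) x = qform A x + qform B x"
  unfolding qform_def by (simp add: distrib_left distrib_right sum.distrib)

lemma qform_diff: "qform (A - B) x = qform A x - qform B x"
  unfolding qform_def by (simp add: right_diff_distrib left_diff_distrib sum_subtractf)

lemma qform_scaleR: "qform (c *\<^sub>R A) x = of_real c * qform A x"
  unfolding qform_def
  by (simp add: sum_distrib_left scaleR_conv_of_real[where 'a=complex] mult_ac)

lemma qform_congruence: "qform (cadj P ** A ** P) x = qform A (P *v x)"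
  by (simp add: qform_conv_cinner cinner_matrix_vector_mult[of x "cadj P"]
      flip: matrix_vector_mul_assoc)

lemma Im_qform_hermitian: "hermitian A \<Longrightarrow> Im (qform A x) = 0"
  using qform_cadj[of A x] unfolding hermitian_def by (metis cnj.sel(2) neg_equal_zero)

lemma pos_semidef_iff: "pos_semidef A \<longleftrightarrow> hermitian A \<and> (\<forall>x. 0 \<le> Re (qform A x))"
  unfolding pos_semidef_def using Im_qform_hermitian by blast

lemma pos_def_iff: "pos_def A \<longleftrightarrow> hermitian A \<and> (\<forall>x. x \<noteq> 0 \<longrightarrow> 0 < Re (qform A x))"
  unfolding pos_def_def using Im_qform_hermitian by blast

lemma pos_def_imp_pos_semidef: "pos_def A \<Longrightarrow> pos_semidef A"
  unfolding pos_def_iff pos_semidef_iff by (metis less_imp_le order.refl qform_zero_right zero_complex.sel(1))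

lemma pos_semidef_scaleR: "0 \<le> c \<Longrightarrow> pos_semidef A \<Longrightarrow> pos_semidef (c *\<^sub>R A)"
  unfolding pos_semidef_iff hermitian_def by (simp add: qform_scaleR)

definition hermitian_part :: "complex^'n^'n \<Rightarrow> complex^'n^'n" where
  "hermitian_part A = (1/2::real) *\<^sub>R (A + cadj A)"

lemma hermitian_part_eq_self: "hermitian A \<Longrightarrow> hermitian_part A = A"
  unfolding hermitian_def hermitian_part_def by simp

lemma Re_qform_hermitian_part: "Re (qform (hermitian_part A) x) = Re (qform A x)"
  unfolding hermitian_part_def by (simp add: qform_scaleR qform_add qform_cadj)

lemma hermitian_congruence: "hermitian A \<Longrightarrow> hermitian (cadj P ** A ** P)"
  unfolding hermitian_def by (simp add: cadj_matrix_mult matrix_mul_assoc)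

lemma hermitian_matrix_inv: "hermitian A \<Longrightarrow> invertible A \<Longrightarrow> hermitian (matrix_inv A)"
  unfolding hermitian_def by (metis matrix_inv_cadj)

lemma invertible_if_pos_def_hermitian_part:
  assumes "pos_def (hermitian_part W)"
  shows "invertible W"
proof -
  have "x = 0" if "W *v x = 0" for x
  proof -
    from that have "qform W x = 0"
      by (simp add: qform_conv_cinner)
    then have "Re (qform (hermitian_part W) x) = 0"
      by (simp add: Re_qform_hermitian_part)
    then show ?thesis
      using assms unfolding pos_def_iff by force
  qed
  then show ?thesis
    using matrix_left_invertible_ker invertible_left_inverse by blast
qed

lemma pos_def_invertible: "pos_def A \<Longrightarrow> invertible A"
  by (metis invertible_if_pos_def_hermitian_part hermitian_part_eq_self pos_def_iff)

lemma pos_def_congruence: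
  fixes H P :: "complex^'n^'n"
  assumes "pos_def H" and "invertible P"
  shows "pos_def (cadj P ** H ** P)"
  unfolding pos_def_iff
proof (intro conjI allI impI)
  show "hermitian (cadj P ** H ** P)"
    using assms(1) hermitian_congruence pos_def_iff by blast
  fix x :: "complex^'n"
  assume "x \<noteq> 0"
  then have "P *v x \<noteq> 0"
    using assms(2)
    by (metis matrix_inv_left matrix_vector_mul_assoc matrix_vector_mul_lid matrix_vector_mult_0_right)
  then show "0 < Re (qform (cadj P ** H ** P) x)"
    using assms(1) by (simp add: qform_congruence pos_def_iff)
qed

lemma pos_semidef_congruence: "pos_semidef H \<Longrightarrow> pos_semidef (cadj P ** H ** P)"
  unfolding pos_semidef_iff by (simp add: hermitian_congruence qform_congruence)

lemma loewner_ge_congruence: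
  "loewner_ge X Y \<Longrightarrow> loewner_ge (cadj P ** X ** P) (cadj P ** Y ** P)"
  unfolding loewner_ge_def
  by (metis hermitian_congruence pos_semidef_congruence matrix_diff_ldistrib matrix_diff_rdistrib)

lemma pos_def_matrix_inv:
  assumes "pos_def H"
  shows "pos_def (matrix_inv H)"
proof -
  have H: "invertible H" "cadj H = H"
    using assms pos_def_invertible pos_def_iff hermitian_def by blast+
  then have "cadj (matrix_inv H) ** H ** matrix_inv H = matrix_inv H"
    by (simp add: matrix_inv_cadj[symmetric] matrix_inv_right flip: matrix_mul_assoc)
  then show ?thesis
    using pos_def_congruence[OF assms invertible_matrix_inv[OF H(1)]] by simp
qed

lemma loewner_ge_matrix_inv:
  assumes A: "pos_def A" and BA: "loewner_ge B A"
  shows "loewner_ge (matrix_inv A) (matrix_inv B)"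
proof -
  have A_le_B: "Re (qform A x) \<le> Re (qform B x)" for x
    using BA by (simp add: loewner_ge_def pos_semidef_iff qform_diff)
  have B: "pos_def B"
    using A BA A_le_B unfolding pos_def_iff loewner_ge_def by (meson less_le_trans)
  define F G where "F = matrix_inv A" and "G = matrix_inv B"
  have AF: "A ** F = mat 1" and BG: "B ** G = mat 1"
    unfolding F_def G_def using A B pos_def_invertible matrix_inv_right by blast+
  have hA: "cadj A = A"
    using A unfolding pos_def_iff hermitian_def by blast
  have "Re (qform G x) \<le> Re (qform F x)" for x
  proof -
    \<comment> \<open>Expand \<open>0 \<le> (z - w)\<^sup>* A (z - w)\<close> for \<open>w = A\<^sup>-\<^sup>1 x\<close>, \<open>z = B\<^sup>-\<^sup>1 x\<close>
      and bound \<open>z\<^sup>* A z \<le> z\<^sup>* B z = z\<^sup>* x\<close>.\<close>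
    define w z where "w = F *v x" and "z = G *v x"
    have Aw: "A *v w = x" and Bz: "B *v z = x"
      unfolding w_def z_def by (simp_all add: matrix_vector_mul_assoc AF BG)
    have "0 \<le> Re (qform A (z - w))"
      using A pos_def_imp_pos_semidef pos_semidef_iff by blast
    also have "qform A (z - w) = qform A z - cinner z x - cinner w (A *v z) + cinner w x"
      by (simp add: qform_conv_cinner matrix_vector_mult_diff_distrib cinner_diff_left
          cinner_diff_right Aw)
    also have "cinner w (A *v z) = cinner x z"
      by (simp add: cinner_matrix_vector_mult hA Aw)
    finally have "0 \<le> Re (qform A z - cinner z x - cinner x z + cinner w x)" .
    moreover have "Re (qform A z) \<le> Re (cinner z x)"
      using A_le_B[of z] by (simp add: qform_conv_cinner Bz)
    ultimately show ?thesis
      using Re_cinner_commute[of z x] Re_cinner_commute[of x w] unfolding w_def z_def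
      by (simp add: qform_conv_cinner)
  qed
  moreover have "hermitian F" and "hermitian G"
    unfolding F_def G_def using A B pos_def_iff pos_def_invertible hermitian_matrix_inv by blast+
  ultimately show ?thesis
    unfolding loewner_ge_def pos_semidef_iff F_def[symmetric] G_def[symmetric]
    by (auto simp: qform_diff hermitian_def)
qed

subsection \<open>The Hermitian part of the inverse\<close>

lemma half_sum_matrix_inv_cadj:
  "invertible W \<Longrightarrow>
    (1/2::real) *\<^sub>R (matrix_inv W + matrix_inv (cadj W)) = hermitian_part (matrix_inv W)"
  unfolding hermitian_part_def by (simp add: matrix_inv_cadj)

lemma hermitian_part_matrix_inv:
  assumes "invertible W"
  shows "hermitian_part (matrix_inv W) = cadj (matrix_inv W) ** hermitian_part W ** matrix_inv W"
proof -
  have WX: "W ** matrix_inv W = mat 1"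
    using assms by (rule matrix_inv_right)
  then have "cadj (matrix_inv W) ** cadj W = mat 1"
    by (metis cadj_mat cadj_matrix_mult)
  with WX show ?thesis
    unfolding hermitian_part_def
    by (simp add: matrix_mult_simps matrix_inverse_cancel_left add.commute flip: matrix_mul_assoc)
qed

lemma reflected_inverse_sandwich:
  fixes W X H :: "'a::real_algebra_1^'n^'n"
  assumes "W ** X = mat 1" and "X ** W = mat 1"
  shows "(2 *\<^sub>R H - W) ** X ** (2 *\<^sub>R H - W) = 4 *\<^sub>R (H ** X ** H) - 4 *\<^sub>R H + W"
proof -
  have "4 *\<^sub>R H = 2 *\<^sub>R H + 2 *\<^sub>R H"
    by (simp flip: scaleR_add_left)
  with assms show ?thesis
    by (simp add: matrix_mult_simps matrix_inverse_cancel_left algebra_simps flip: matrix_mul_assoc)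
qed

lemma half_sum_cadj_inv_cadj:
  assumes "invertible W"
  shows "(1/2::real) *\<^sub>R (cadj W ** matrix_inv W ** cadj W + W ** matrix_inv (cadj W) ** W)
    = 4 *\<^sub>R (hermitian_part W ** hermitian_part (matrix_inv W) ** hermitian_part W)
      - 3 *\<^sub>R hermitian_part W"
proof -
  define H where "H = hermitian_part W"
  have W': "cadj W = 2 *\<^sub>R H - W" and W: "W = 2 *\<^sub>R H - cadj W"
    unfolding H_def hermitian_part_def by (simp_all add: algebra_simps)
  have iW': "invertible (cadj W)"
    using assms by (rule invertible_cadj)
  have E1: "cadj W ** matrix_inv W ** cadj W = 4 *\<^sub>R (H ** matrix_inv W ** H) - 4 *\<^sub>R H + W"
    unfolding W' using assms matrix_inv_left matrix_inv_right by (blast intro: reflected_inverse_sandwich)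
  have E2: "W ** matrix_inv (cadj W) ** W = 4 *\<^sub>R (H ** matrix_inv (cadj W) ** H) - 4 *\<^sub>R H + cadj W"
    using reflected_inverse_sandwich[OF matrix_inv_right[OF iW'] matrix_inv_left[OF iW'], of H]
    by (simp flip: W)
  show ?thesis
    unfolding H_def[symmetric] E1 E2 half_sum_matrix_inv_cadj[OF assms, symmetric]
    by (simp add: matrix_mult_simps W' vec_eq_iff scaleR_conv_of_real[where 'a=complex] algebra_simps)
qed

lemma pos_def_hermitian_part_matrix_inv:
  assumes "pos_def (hermitian_part W)"
  shows "pos_def (hermitian_part (matrix_inv W))"
proof -
  have "invertible W"
    using assms by (rule invertible_if_pos_def_hermitian_part)
  then show ?thesis
    using assms by (simp add: hermitian_part_matrix_inv pos_def_congruence invertible_matrix_inv)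
qed

lemma matrix_inv_hermitian_part_matrix_inv:
  assumes W: "invertible W" and H: "invertible (hermitian_part W)"
  shows "matrix_inv (hermitian_part (matrix_inv W))
    = W ** matrix_inv (hermitian_part W) ** cadj W"
proof (rule matrix_inv_unique)
  have "cadj (matrix_inv W) ** cadj W = mat 1"
    using W by (metis cadj_mat cadj_matrix_mult matrix_inv_right)
  then show "hermitian_part (matrix_inv W) ** (W ** matrix_inv (hermitian_part W) ** cadj W) = mat 1"
    using W H
    by (simp add: hermitian_part_matrix_inv matrix_inv_left matrix_inv_right
        matrix_inverse_cancel_left flip: matrix_mul_assoc)
qed

subsection \<open>Skew-Hermitian perturbations\<close>

definition skew_part :: "complex^'n^'n \<Rightarrow> complex^'n^'n" where
  "skew_part A = (1/2::real) *\<^sub>R (A - cadj A)"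

lemma cadj_skew_part: "cadj (skew_part A) = - skew_part A"
  unfolding skew_part_def by (simp flip: scaleR_minus_right)

lemma hermitian_part_plus_skew_part: "hermitian_part A + skew_part A = A"
  unfolding hermitian_part_def skew_part_def by (simp flip: scaleR_add_right)

lemma hermitian_part_add_skew:
  assumes "hermitian H" and "cadj S = - S"
  shows "hermitian_part (H + c *\<^sub>R S) = H"
  using assms unfolding hermitian_part_def hermitian_def by simp

lemma invertible_skew_shift:
  assumes "pos_def H" and "cadj S = - S"
  shows "invertible (H + c *\<^sub>R S)"
  using assms by (simp add: invertible_if_pos_def_hermitian_part hermitian_part_add_skew pos_def_iff)

lemma skew_shift_inverse_sandwich:
  assumes H: "hermitian H" "invertible H" and S: "cadj S = - S"
  shows "(H + c *\<^sub>R S) ** matrix_inv H ** cadj (H + c *\<^sub>R S)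
    = H + c\<^sup>2 *\<^sub>R (cadj S ** matrix_inv H ** S)"
  using H S unfolding hermitian_def
  by (simp add: matrix_mult_simps matrix_inverse_cancel_left matrix_inv_left matrix_inv_right
      algebra_simps power2_eq_square flip: matrix_mul_assoc)

lemma loewner_ge_hermitian_part_matrix_inv_skew_shift:
  assumes H: "pos_def H" and S: "cadj S = - S" and ab: "a\<^sup>2 \<le> b\<^sup>2"
  shows "loewner_ge (hermitian_part (matrix_inv (H + a *\<^sub>R S)))
                    (hermitian_part (matrix_inv (H + b *\<^sub>R S)))"
proof -
  define M where "M = cadj S ** matrix_inv H ** S"
  define G where "G c = hermitian_part (matrix_inv (H + c *\<^sub>R S))" for c
  have hH: "hermitian H" and iH: "invertible H"
    using H pos_def_iff pos_def_invertible by blast+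
  have part: "hermitian_part (H + c *\<^sub>R S) = H" for c
    using hH S by (rule hermitian_part_add_skew)
  have G_pos: "pos_def (G c)" for c
    unfolding G_def using H part pos_def_hermitian_part_matrix_inv by metis
  have inv_G: "matrix_inv (G c) = H + c\<^sup>2 *\<^sub>R M" for c
    unfolding G_def M_def
    using matrix_inv_hermitian_part_matrix_inv[OF invertible_skew_shift[OF H S]] part iH
      skew_shift_inverse_sandwich[OF hH iH S]
    by metis
  have M: "pos_semidef M"
    unfolding M_def using H pos_def_matrix_inv pos_def_imp_pos_semidef pos_semidef_congruence
    by blast
  then have "hermitian M"
    unfolding pos_semidef_def by blast
  moreover have "pos_semidef ((b\<^sup>2 - a\<^sup>2) *\<^sub>R M)"
    using M ab by (simp add: pos_semidef_scaleR)
  moreover have "H + b\<^sup>2 *\<^sub>R M - (H + a\<^sup>2 *\<^sub>R M) = (b\<^sup>2 - a\<^sup>2) *\<^sub>R M"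
    by (simp add: algebra_simps)
  ultimately have "loewner_ge (matrix_inv (G b)) (matrix_inv (G a))"
    unfolding loewner_ge_def inv_G using hH by (simp add: hermitian_def)
  then have "loewner_ge (matrix_inv (matrix_inv (G a))) (matrix_inv (matrix_inv (G b)))"
    using G_pos pos_def_matrix_inv loewner_ge_matrix_inv by blast
  then show ?thesis
    using G_pos pos_def_invertible matrix_inv_matrix_inv G_def by metis
qed

lemma loewner_ge_matrix_inv_hermitian_part:
  assumes W: "pos_def (hermitian_part W)"
  shows "loewner_ge (matrix_inv (hermitian_part W)) (hermitian_part (matrix_inv W))"
proof -
  define H S where "H = hermitian_part W" and "S = skew_part W"
  have "hermitian_part (matrix_inv (H + 0 *\<^sub>R S)) = matrix_inv H"
    using W unfolding H_def
    by (simp add: hermitian_part_eq_self hermitian_matrix_inv pos_def_invertible pos_def_iff)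
  moreover have "H + 1 *\<^sub>R S = W"
    unfolding H_def S_def by (simp add: hermitian_part_plus_skew_part)
  moreover have "loewner_ge (hermitian_part (matrix_inv (H + 0 *\<^sub>R S)))
                            (hermitian_part (matrix_inv (H + 1 *\<^sub>R S)))"
    using W unfolding H_def S_def
    by (intro loewner_ge_hermitian_part_matrix_inv_skew_shift) (simp_all add: cadj_skew_part)
  ultimately show ?thesis
    unfolding H_def by simp
qed

lemma loewner_ge_hermitian_part_half_sum_cadj_inv_cadj:
  assumes W: "pos_def (hermitian_part W)"
  shows "loewner_ge (hermitian_part W)
    ((1/2::real) *\<^sub>R (cadj W ** matrix_inv W ** cadj W + W ** matrix_inv (cadj W) ** W))"
proof -
  define H G where "H = hermitian_part W" and "G = hermitian_part (matrix_inv W)"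
  have hH: "cadj H = H" and iH: "invertible H"
    using W unfolding H_def by (simp_all add: pos_def_iff hermitian_def pos_def_invertible)
  have "loewner_ge (cadj H ** matrix_inv H ** H) (cadj H ** G ** H)"
    using loewner_ge_matrix_inv_hermitian_part[OF W] unfolding H_def G_def
    by (rule loewner_ge_congruence)
  then have HG: "loewner_ge H (H ** G ** H)"
    using hH iH by (simp add: matrix_inv_right)
  have "H - (4 *\<^sub>R (H ** G ** H) - 3 *\<^sub>R H) = 4 *\<^sub>R (H - H ** G ** H)"
    by (simp add: vec_eq_iff scaleR_conv_of_real[where 'a=complex] algebra_simps)
  then have "loewner_ge H (4 *\<^sub>R (H ** G ** H) - 3 *\<^sub>R H)"
    using HG unfolding loewner_ge_def hermitian_def by (simp add: pos_semidef_scaleR)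
  then show ?thesis
    using W invertible_if_pos_def_hermitian_part half_sum_cadj_inv_cadj
    unfolding H_def G_def by metis
qed

theorem lemma5p26:
  fixes R :: "complex^'n^'n"
  defines "Rt \<equiv> (1/2::real) *\<^sub>R (R + cadj R)"
      and "Rb \<equiv> (1/2::real) *\<^sub>R (R - cadj R)"
  assumes "pos_def Rt"
  shows "invertible R \<and>
    pos_def ((1/2::real) *\<^sub>R (matrix_inv R + matrix_inv (cadj R))) \<and>
    loewner_ge (matrix_inv ((1/2::real) *\<^sub>R (R + cadj R)))
                    ((1/2::real) *\<^sub>R (matrix_inv R + matrix_inv (cadj R))) \<and>
    loewner_ge ((1/2::real) *\<^sub>R (R + cadj R))
                    ((1/2::real) *\<^sub>R (cadj R ** matrix_inv R ** cadj R + R ** matrix_inv (cadj R) ** R)) \<and>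
    (\<forall>\<alpha> \<beta>::real. \<alpha> \<in> {-1..1} \<longrightarrow> \<beta> \<in> {-1..1} \<longrightarrow> \<bar>\<alpha>\<bar> \<le> \<bar>\<beta>\<bar> \<longrightarrow>
           loewner_ge
             ((1/2::real) *\<^sub>R (matrix_inv (Rt + \<alpha> *\<^sub>R Rb) + matrix_inv (cadj (Rt + \<alpha> *\<^sub>R Rb))))
             ((1/2::real) *\<^sub>R (matrix_inv (Rt + \<beta> *\<^sub>R Rb) + matrix_inv (cadj (Rt + \<beta> *\<^sub>R Rb)))))"
proof -
  have Rt: "Rt = hermitian_part R" and Rb: "Rb = skew_part R"
    unfolding Rt_def Rb_def hermitian_part_def skew_part_def by simp_all
  have pos_R: "pos_def (hermitian_part R)"
    using assms(3) unfolding Rt .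
  have inv_R: "invertible R"
    using pos_R by (rule invertible_if_pos_def_hermitian_part)
  have skew: "cadj Rb = - Rb"
    unfolding Rb by (rule cadj_skew_part)
  have family: "loewner_ge
      ((1/2::real) *\<^sub>R (matrix_inv (Rt + \<alpha> *\<^sub>R Rb) + matrix_inv (cadj (Rt + \<alpha> *\<^sub>R Rb))))
      ((1/2::real) *\<^sub>R (matrix_inv (Rt + \<beta> *\<^sub>R Rb) + matrix_inv (cadj (Rt + \<beta> *\<^sub>R Rb))))"
    if "\<bar>\<alpha>\<bar> \<le> \<bar>\<beta>\<bar>" for \<alpha> \<beta> :: real
    using loewner_ge_hermitian_part_matrix_inv_skew_shift[OF assms(3) skew, of \<alpha> \<beta>] that
    by (simp only: half_sum_matrix_inv_cadj[OF invertible_skew_shift[OF assms(3) skew]]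
        abs_le_square_iff)
  show ?thesis
    unfolding hermitian_part_def[symmetric] half_sum_matrix_inv_cadj[OF inv_R]
    using inv_R pos_def_hermitian_part_matrix_inv[OF pos_R]
      loewner_ge_matrix_inv_hermitian_part[OF pos_R]
      loewner_ge_hermitian_part_half_sum_cadj_inv_cadj[OF pos_R] family
    by blast
qed

end
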